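(* For $n \ge 2$ with $n \equiv 2 \pmod 6$, if $G \cong P_n$ and $v$ is an arbitrary vertex of $G$, then $\gamma_{\rm tg}(G|v) \le \gamma_{\rm tg}(G) - 1$.
   Context: Total domination game on a graph without isolated vertices: Dominator and Staller alternately choose vertices, each chosen vertex must be adjacent to some vertex not yet totally dominated; the game ends when no legal move exists; Dominator minimizes, Staller maximizes the number of moves; $\gamma_{\rm tg}(G)$ is the number of moves in the Dominator-start game under optimal play. $G|v$ is $G$ with $v$ declared already totally dominated, and $\gamma_{\rm tg}(G|v)$ is the corresponding optimal number of moves in the Dominator-start game. *)

theory Defs
  imports Main
begin

text \<open>A finite simple graph is given by a vertex set V and a symmetric,
irreflexive adjacency relation E (only its restriction to V matters).\<close>

definition open_nbhd :: "'a set \<Rightarrow> ('a \<Rightarrow> 'a \<Rightarrow> bool) \<Rightarrow> 'a \<Rightarrow> 'a set" where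
  "open_nbhd V E u = {w \<in> V. E u w}"

text \<open>Legal moves when D is the set of already totally dominated vertices:
a vertex u is legal iff it has a neighbour that is not yet totally dominated.\<close>

definition legal_moves :: "'a set \<Rightarrow> ('a \<Rightarrow> 'a \<Rightarrow> bool) \<Rightarrow> 'a set \<Rightarrow> 'a set" where
  "legal_moves V E D = {u \<in> V. open_nbhd V E u - D \<noteq> {}}"

text \<open>Optimal number of remaining moves from the position where D is totally
dominated; the Boolean says whether Dominator is to move.  The first argument is
a fuel bound; every move totally dominates at least one new vertex of V, so
fuel card V + 1 is more than enough for the game to end.\<close>

fun tg_val :: "nat \<Rightarrow> 'a set \<Rightarrow> ('a \<Rightarrow> 'a \<Rightarrow> bool) \<Rightarrow> 'a set \<Rightarrow> bool \<Rightarrow> nat" where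
  "tg_val 0 V E D d = 0"
| "tg_val (Suc f) V E D d =
     (if legal_moves V E D = {} then 0
      else if d then 1 + Min ((\<lambda>u. tg_val f V E (D \<union> open_nbhd V E u) False) ` legal_moves V E D)
      else 1 + Max ((\<lambda>u. tg_val f V E (D \<union> open_nbhd V E u) True) ` legal_moves V E D))"

text \<open>Game total domination number of G|S (vertices of S declared totally
dominated), Dominator-start game.\<close>

definition gamma_tg_rel :: "'a set \<Rightarrow> ('a \<Rightarrow> 'a \<Rightarrow> bool) \<Rightarrow> 'a set \<Rightarrow> nat" where
  "gamma_tg_rel V E S = tg_val (Suc (card V)) V E S True"

definition gamma_tg :: "'a set \<Rightarrow> ('a \<Rightarrow> 'a \<Rightarrow> bool) \<Rightarrow> nat" where
  "gamma_tg V E = gamma_tg_rel V E {}"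

definition path_V :: "nat \<Rightarrow> nat set" where
  "path_V n = {0..<n}"

definition path_E :: "nat \<Rightarrow> nat \<Rightarrow> bool" where
  "path_E i j \<longleftrightarrow> i = Suc j \<or> j = Suc i"

definition graph_iso :: "'a set \<Rightarrow> ('a \<Rightarrow> 'a \<Rightarrow> bool) \<Rightarrow> 'b set \<Rightarrow> ('b \<Rightarrow> 'b \<Rightarrow> bool) \<Rightarrow> bool" where
  "graph_iso V E V' E' \<longleftrightarrow> (\<exists>f. bij_betw f V V' \<and> (\<forall>x\<in>V. \<forall>y\<in>V. E x y \<longleftrightarrow> E' (f x) (f y)))"

end

(*
  In P_{2h} playing u totally dominates u - 1 and u + 1, which are consecutive
  vertices of the same parity. The game therefore splits into two games, on the even
  and on the odd vertices, where a move totally dominates an end vertex or two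
  adjacent vertices of a block of consecutive not yet totally dominated vertices. The
  value of a position with block lengths R is the sum of (2L + 1) div 3 over L in R
  plus half the number of blocks of length 2 mod 3, rounded down if Dominator is to
  move and up otherwise; this is checked against the optimality equations of the
  game. For n = 6k + 2 the empty position has two blocks of length 3k + 1 and value
  4k + 2, while declaring v totally dominated splits one of them into blocks of
  lengths a and c with a + c = 3k, and the value drops to at most 4k + 1.
*)

theory Submission
  imports Defs
begin

section \<open>Blocks of True in a Boolean list\<close>

text \<open>true_runs l lists the lengths of the pieces into which the False entries cut l,
  so it contains a 0 for each empty piece.\<close>

fun true_runs :: "bool list \<Rightarrow> nat list" where
  "true_runs [] = [0]"
| "true_runs (True # l) = Suc (hd (true_runs l)) # tl (true_runs l)"
| "true_runs (False # l) = 0 # true_runs l"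

lemma true_runs_ne [simp]: "true_runs l \<noteq> []"
  by (cases l rule: true_runs.cases) auto

lemma true_runs_append:
  "true_runs (xs @ ys) =
     butlast (true_runs xs) @ [last (true_runs xs) + hd (true_runs ys)] @ tl (true_runs ys)"
proof (induction xs rule: true_runs.induct)
  case 1
  then show ?case by (cases "true_runs ys") auto
next
  case (2 l)
  then show ?case by (cases "true_runs l"; cases "tl (true_runs l)") auto
next
  case (3 l)
  then show ?case by (cases "true_runs l") auto
qed

lemma true_runs_append_False: "true_runs (xs @ False # ys) = true_runs xs @ true_runs ys"
  by (simp add: true_runs_append)

lemma true_runs_replicate_append:
  "true_runs (replicate k True @ ys) = (k + hd (true_runs ys)) # tl (true_runs ys)"
  by (induction k) auto

lemma true_runs_replicate: "true_runs (replicate k True) = [k]"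
  using true_runs_replicate_append[of k "[]"] by simp

lemma hd_true_runs_eq_0: "ys = [] \<or> \<not> hd ys \<Longrightarrow> hd (true_runs ys) = 0"
  by (cases ys) auto

lemma last_true_runs_eq_0:
  assumes "xs = [] \<or> \<not> last xs"
  shows "last (true_runs xs) = 0"
proof (cases "xs = []")
  case False
  with assms have "xs = butlast xs @ [False]"
    by (metis append_butlast_last_id)
  then have "true_runs xs = true_runs (butlast xs) @ true_runs []"
    by (metis true_runs_append_False)
  then show ?thesis by simp
qed simp

lemma true_runs_block:
  assumes "last (true_runs xs) = 0" and "hd (true_runs ys) = 0"
  shows "true_runs (xs @ replicate L True @ ys) = butlast (true_runs xs) @ [L] @ tl (true_runs ys)"
  using assms by (simp add: true_runs_append true_runs_replicate_append true_runs_replicate)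

lemma true_runs_hd_block:
  "\<exists>ys. l = replicate (hd (true_runs l)) True @ ys \<and> hd (true_runs ys) = 0"
proof (induction l rule: true_runs.induct)
  case 3
  then show ?case by (intro exI[of _ "False # _"]) simp
qed auto

lemma true_runs_tl_block:
  "L \<in> set (tl (true_runs l)) \<Longrightarrow>
   \<exists>xs ys. l = xs @ replicate L True @ ys \<and> xs \<noteq> [] \<and> \<not> last xs \<and> hd (true_runs ys) = 0"
proof (induction l arbitrary: L rule: true_runs.induct)
  case (2 l)
  then have "L \<in> set (tl (true_runs l))" by simp
  with "2.IH" obtain xs ys where "l = xs @ replicate L True @ ys" "xs \<noteq> []" "\<not> last xs"
      "hd (true_runs ys) = 0"
    by blast
  then show ?case by (intro exI[of _ "True # xs"] exI[of _ ys]) auto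
next
  case (3 l)
  then have "L = hd (true_runs l) \<or> L \<in> set (tl (true_runs l))"
    by (metis list.collapse true_runs_ne set_ConsD true_runs.simps(3) list.sel(3))
  then show ?case
  proof
    assume "L = hd (true_runs l)"
    with true_runs_hd_block[of l] obtain ys where "l = replicate L True @ ys" "hd (true_runs ys) = 0"
      by auto
    then show ?case by (intro exI[of _ "[False]"] exI[of _ ys]) auto
  next
    assume "L \<in> set (tl (true_runs l))"
    with "3.IH" obtain xs ys where "l = xs @ replicate L True @ ys" "xs \<noteq> []" "\<not> last xs"
        "hd (true_runs ys) = 0"
      by blast
    then show ?case by (intro exI[of _ "False # xs"] exI[of _ ys]) auto
  qed
qed simp

lemma true_runs_obtain_block:
  assumes "L \<in> set (true_runs l)"
  obtains xs ys where "l = xs @ replicate L True @ ys" and "xs = [] \<or> \<not> last xs"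
    and "hd (true_runs ys) = 0"
proof -
  have "L = hd (true_runs l) \<or> L \<in> set (tl (true_runs l))"
    using assms by (metis list.collapse true_runs_ne set_ConsD)
  then show ?thesis
  proof
    assume "L = hd (true_runs l)"
    with true_runs_hd_block[of l] obtain ys where "l = replicate L True @ ys" "hd (true_runs ys) = 0"
      by auto
    then show ?thesis using that[of "[]" ys] by simp
  next
    assume "L \<in> set (tl (true_runs l))"
    then show ?thesis using that true_runs_tl_block[of L l] by blast
  qed
qed

lemma ex_positive_true_run: "True \<in> set l \<Longrightarrow> \<exists>L\<in>set (true_runs l). 1 \<le> L"
proof (induction l rule: true_runs.induct)
  case (2 l)
  then show ?case by (cases "true_runs l") auto
qed auto

lemma true_runs_eq_0: "True \<notin> set l \<Longrightarrow> L \<in> set (true_runs l) \<Longrightarrow> L = 0"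
  by (induction l arbitrary: L rule: true_runs.induct) auto

section \<open>The value of a position\<close>

text \<open>In position_value d R, R lists the lengths of the blocks of consecutive not yet
  totally dominated vertices in the two parity classes, and d tells whether Dominator
  is to move.\<close>

definition run_cost :: "nat \<Rightarrow> nat" where
  "run_cost L = (2 * L + 1) div 3"

definition runs_cost :: "nat list \<Rightarrow> nat" where
  "runs_cost R = sum_list (map run_cost R)"

definition critical_runs :: "nat list \<Rightarrow> nat" where
  "critical_runs R = length (filter (\<lambda>L. L mod 3 = 2) R)"

definition position_value :: "bool \<Rightarrow> nat list \<Rightarrow> nat" where
  "position_value d R =
     runs_cost R + (if d then critical_runs R div 2 else (critical_runs R + 1) div 2)"

lemma less_3_cases: "(j::nat) < 3 \<Longrightarrow> j = 0 \<or> j = 1 \<or> j = 2"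
  by auto

lemma nat_parity_cases: "\<exists>t. (Y::nat) = 2 * t \<or> Y = 2 * t + 1"
  by presburger

lemma run_cost_3_mult_add: "run_cost (3 * k + r) = 2 * k + run_cost r"
  unfolding run_cost_def by simp

lemma run_cost_0 [simp]: "run_cost 0 = 0"
  by (simp add: run_cost_def)

lemma run_cost_Suc: "run_cost (Suc c) = run_cost c + (if c mod 3 = 1 then 0 else 1)"
proof -
  define j where "j = c mod 3"
  have c: "c = 3 * (c div 3) + j" unfolding j_def by simp
  then have "run_cost (Suc c) = 2 * (c div 3) + run_cost (Suc j)"
    by (metis add_Suc_right run_cost_3_mult_add)
  moreover have "run_cost c = 2 * (c div 3) + run_cost j"
    using c run_cost_3_mult_add by metis
  moreover have "j < 3" unfolding j_def by simp
  ultimately show ?thesis unfolding j_def[symmetric]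
    using less_3_cases[OF \<open>j < 3\<close>] by (elim disjE) (simp_all add: run_cost_def)
qed

lemma run_cost_pair:
  "run_cost (a + 2 + c) = run_cost a + run_cost c +
     (if (a mod 3 = 0 \<and> c mod 3 = 2) \<or> (a mod 3 = 2 \<and> c mod 3 = 0) \<or> (a mod 3 = 2 \<and> c mod 3 = 2)
      then 2 else 1)"
proof -
  define i where "i = a mod 3"
  define j where "j = c mod 3"
  have a: "a = 3 * (a div 3) + i" and c: "c = 3 * (c div 3) + j"
    unfolding i_def j_def by simp_all
  have "a + 2 + c = 3 * (a div 3 + c div 3) + (i + j + 2)"
    using a c by simp
  then have "run_cost (a + 2 + c) = 2 * (a div 3 + c div 3) + run_cost (i + j + 2)"
    by (metis run_cost_3_mult_add)
  moreover have "run_cost a = 2 * (a div 3) + run_cost i" "run_cost c = 2 * (c div 3) + run_cost j"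
    using a c run_cost_3_mult_add by metis+
  moreover have "i < 3" "j < 3" unfolding i_def j_def by simp_all
  ultimately show ?thesis unfolding i_def[symmetric] j_def[symmetric]
    using less_3_cases[OF \<open>i < 3\<close>] less_3_cases[OF \<open>j < 3\<close>]
    by (elim disjE) (simp_all add: run_cost_def)
qed

lemma runs_cost_simps [simp]:
  "runs_cost [] = 0" "runs_cost (L # R) = run_cost L + runs_cost R"
  "runs_cost (R @ R') = runs_cost R + runs_cost R'"
  by (simp_all add: runs_cost_def)

lemma critical_runs_simps [simp]:
  "critical_runs [] = 0"
  "critical_runs (L # R) = (if L mod 3 = 2 then 1 else 0) + critical_runs R"
  "critical_runs (R @ R') = critical_runs R + critical_runs R'"
  by (simp_all add: critical_runs_def)

lemma critical_runs_eq_0: "\<forall>L\<in>set R. L mod 3 \<noteq> 2 \<Longrightarrow> critical_runs R = 0"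
  by (induction R) auto

lemma position_value_eq_0: "\<forall>L\<in>set R. L = 0 \<Longrightarrow> position_value d R = 0"
  by (induction R) (auto simp: position_value_def)

lemma position_value_swap: "position_value d (R1 @ [c, 0] @ R2) = position_value d (R1 @ [0, c] @ R2)"
  by (simp add: position_value_def)

lemma position_value_shorten:
  "position_value True (R1 @ [Suc c] @ R2) \<le> 1 + position_value False (R1 @ [0, c] @ R2)"
  "1 + position_value True (R1 @ [0, c] @ R2) \<le> position_value False (R1 @ [Suc c] @ R2)"
proof -
  define X where "X = runs_cost R1 + runs_cost R2"
  define Y where "Y = critical_runs R1 + critical_runs R2"
  define j where "j = c mod 3"
  have "j < 3" unfolding j_def by simp
  have mod_Suc: "Suc c mod 3 = 2 \<longleftrightarrow> j = 1" unfolding j_def by (simp add: mod_Suc)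
  have e1: "position_value True (R1 @ [Suc c] @ R2) =
      X + run_cost c + (if j = 1 then 0 else 1) + (Y + (if j = 1 then 1 else 0)) div 2"
    by (simp add: position_value_def X_def Y_def run_cost_Suc mod_Suc j_def)
  have e2: "position_value False (R1 @ [0, c] @ R2) = X + run_cost c + (Y + (if j = 2 then 1 else 0) + 1) div 2"
    by (simp add: position_value_def X_def Y_def j_def)
  have e3: "position_value True (R1 @ [0, c] @ R2) = X + run_cost c + (Y + (if j = 2 then 1 else 0)) div 2"
    by (simp add: position_value_def X_def Y_def j_def)
  have e4: "position_value False (R1 @ [Suc c] @ R2) =
      X + run_cost c + (if j = 1 then 0 else 1) + (Y + (if j = 1 then 1 else 0) + 1) div 2"
    by (simp add: position_value_def X_def Y_def run_cost_Suc mod_Suc j_def)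
  obtain t where "Y = 2 * t \<or> Y = 2 * t + 1" using nat_parity_cases by blast
  then show "position_value True (R1 @ [Suc c] @ R2) \<le> 1 + position_value False (R1 @ [0, c] @ R2)"
    and "1 + position_value True (R1 @ [0, c] @ R2) \<le> position_value False (R1 @ [Suc c] @ R2)"
    unfolding e1 e2 e3 e4 using less_3_cases[OF \<open>j < 3\<close>] by (elim disjE; simp)+
qed

lemma position_value_split_pair:
  "position_value True (R1 @ [a + 2 + c] @ R2) \<le> 1 + position_value False (R1 @ [a, 0, c] @ R2)"
  "1 + position_value True (R1 @ [a, 0, c] @ R2) \<le> position_value False (R1 @ [a + 2 + c] @ R2)"
proof -
  define X where "X = runs_cost R1 + runs_cost R2"
  define Y where "Y = critical_runs R1 + critical_runs R2"
  define i where "i = a mod 3"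
  define j where "j = c mod 3"
  have "i < 3" "j < 3" unfolding i_def j_def by simp_all
  define k where "k = (i + j + 2) mod 3"
  define extra where "extra =
    (if (i = 0 \<and> j = 2) \<or> (i = 2 \<and> j = 0) \<or> (i = 2 \<and> j = 2) then 2 else (1::nat))"
  have m: "(a + 2 + c) mod 3 = k"
  proof -
    have "a + 2 + c = (i + j + 2) + 3 * (a div 3 + c div 3)" unfolding i_def j_def by simp
    then show ?thesis unfolding k_def by (metis mod_mult_self2)
  qed
  have r: "run_cost (a + 2 + c) = run_cost a + run_cost c + extra"
    unfolding extra_def i_def j_def by (rule run_cost_pair)
  have e1: "position_value True (R1 @ [a + 2 + c] @ R2) =
      X + run_cost a + run_cost c + extra + (Y + (if k = 2 then 1 else 0)) div 2"
    by (simp add: position_value_def X_def Y_def r[simplified] m[simplified])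
  have e4: "position_value False (R1 @ [a + 2 + c] @ R2) =
      X + run_cost a + run_cost c + extra + (Y + (if k = 2 then 1 else 0) + 1) div 2"
    by (simp add: position_value_def X_def Y_def r[simplified] m[simplified])
  have e2: "position_value False (R1 @ [a, 0, c] @ R2) =
      X + run_cost a + run_cost c + (Y + (if i = 2 then 1 else 0) + (if j = 2 then 1 else 0) + 1) div 2"
    by (simp add: position_value_def X_def Y_def i_def j_def)
  have e3: "position_value True (R1 @ [a, 0, c] @ R2) =
      X + run_cost a + run_cost c + (Y + (if i = 2 then 1 else 0) + (if j = 2 then 1 else 0)) div 2"
    by (simp add: position_value_def X_def Y_def i_def j_def)
  obtain t where "Y = 2 * t \<or> Y = 2 * t + 1" using nat_parity_cases by blast
  then show "position_value True (R1 @ [a + 2 + c] @ R2) \<le> 1 + position_value False (R1 @ [a, 0, c] @ R2)"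
    and "1 + position_value True (R1 @ [a, 0, c] @ R2) \<le> position_value False (R1 @ [a + 2 + c] @ R2)"
    unfolding e1 e2 e3 e4 k_def extra_def
    using less_3_cases[OF \<open>i < 3\<close>] less_3_cases[OF \<open>j < 3\<close>] by (elim disjE; simp)+
qed

text \<open>Dominator's optimal moves: remove two vertices from one end of a block of length
  2 mod 3, or, if there is none, of any block of length at least two, or else play on a
  block of length one. Staller's: remove an end vertex of a block whose length is not
  1 mod 3, or of any block if no length is 2 mod 3.\<close>

lemma position_value_Dominator_pair:
  assumes "Suc (Suc c) mod 3 = 2 \<or> critical_runs (R1 @ [Suc (Suc c)] @ R2) = 0"
  shows "position_value True (R1 @ [Suc (Suc c)] @ R2) = 1 + position_value False (R1 @ [0, 0, c] @ R2)"
proof -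
  define X where "X = runs_cost R1 + runs_cost R2"
  define Y where "Y = critical_runs R1 + critical_runs R2"
  define j where "j = c mod 3"
  have "j < 3" unfolding j_def by simp
  have mods: "Suc c mod 3 = 2 \<longleftrightarrow> j = 1" "Suc c mod 3 = 1 \<longleftrightarrow> j = 0"
    "Suc (Suc c) mod 3 = 2 \<longleftrightarrow> j = 0"
    unfolding j_def by (simp_all add: mod_Suc)
  have e1: "position_value True (R1 @ [Suc (Suc c)] @ R2) = X + run_cost c + (if j = 1 then 0 else 1)
      + (if j = 0 then 0 else 1) + (Y + (if j = 0 then 1 else 0)) div 2"
    using mods(2) by (simp add: position_value_def X_def Y_def run_cost_Suc mods(1,3) j_def)
  have e2: "position_value False (R1 @ [0, 0, c] @ R2) = X + run_cost c + (Y + (if j = 2 then 1 else 0) + 1) div 2"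
    by (simp add: position_value_def X_def Y_def j_def)
  have "j = 0 \<or> Y = 0" using assms by (auto simp: Y_def mods(3) split: if_splits)
  moreover obtain t where "Y = 2 * t \<or> Y = 2 * t + 1" using nat_parity_cases by blast
  ultimately show ?thesis unfolding e1 e2 using less_3_cases[OF \<open>j < 3\<close>]
    by (elim disjE) simp_all
qed

lemma position_value_Dominator_single:
  assumes "critical_runs (R1 @ [1] @ R2) = 0"
  shows "position_value True (R1 @ [1] @ R2) = 1 + position_value False (R1 @ [0, 0] @ R2)"
  using assms by (simp add: position_value_def run_cost_def)

lemma position_value_Staller:
  assumes "Suc c mod 3 \<noteq> 1 \<or> critical_runs (R1 @ [Suc c] @ R2) = 0"
  shows "1 + position_value True (R1 @ [0, c] @ R2) = position_value False (R1 @ [Suc c] @ R2)"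
proof -
  define X where "X = runs_cost R1 + runs_cost R2"
  define Y where "Y = critical_runs R1 + critical_runs R2"
  define j where "j = c mod 3"
  have "j < 3" unfolding j_def by simp
  have mods: "Suc c mod 3 = 2 \<longleftrightarrow> j = 1" "Suc c mod 3 = 1 \<longleftrightarrow> j = 0"
    unfolding j_def by (simp_all add: mod_Suc)
  have e3: "position_value True (R1 @ [0, c] @ R2) = X + run_cost c + (Y + (if j = 2 then 1 else 0)) div 2"
    by (simp add: position_value_def X_def Y_def j_def)
  have e4: "position_value False (R1 @ [Suc c] @ R2) =
      X + run_cost c + (if j = 1 then 0 else 1) + (Y + (if j = 1 then 1 else 0) + 1) div 2"
    by (simp add: position_value_def X_def Y_def run_cost_Suc mods(1) j_def)
  have "j \<noteq> 0 \<or> Y = 0" using assms mods(2) by (auto simp: Y_def split: if_splits)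
  moreover obtain t where "Y = 2 * t \<or> Y = 2 * t + 1" using nat_parity_cases by blast
  ultimately show ?thesis unfolding e3 e4 using less_3_cases[OF \<open>j < 3\<close>]
    by (elim disjE) simp_all
qed

section \<open>Moves as operations on blocks\<close>

definition run_step :: "nat list \<Rightarrow> nat list \<Rightarrow> bool" where
  "run_step R R' \<longleftrightarrow>
     (\<exists>R1 R2 c. R = R1 @ [Suc c] @ R2 \<and> (R' = R1 @ [0, c] @ R2 \<or> R' = R1 @ [c, 0] @ R2)) \<or>
     (\<exists>R1 R2 a c. R = R1 @ [a + 2 + c] @ R2 \<and> R' = R1 @ [a, 0, c] @ R2)"

lemma run_step_value_bounds:
  assumes "run_step R R'"
  shows "position_value True R \<le> 1 + position_value False R'"
    and "1 + position_value True R' \<le> position_value False R"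
  using assms position_value_shorten position_value_split_pair position_value_swap
  unfolding run_step_def by (elim disjE exE conjE; metis)+

lemma take_True_drop:
  assumes "p < length l" and "l ! p"
  shows "l = take p l @ True # drop (Suc p) l" and "l[p := False] = take p l @ False # drop (Suc p) l"
  using assms by (metis id_take_nth_drop, metis upd_conv_take_nth_drop)

lemma run_step_clear_pair:
  assumes "Suc p < length l" and "l ! p" and "l ! Suc p"
  shows "run_step (true_runs l) (true_runs (l[Suc p := False, p := False]))"
proof -
  define xs where "xs = take p l"
  define ys where "ys = drop (Suc (Suc p)) l"
  have "l[Suc p := False] = take (Suc p) l @ False # ys"
    using take_True_drop(2)[OF assms(1,3)] by (simp add: ys_def)
  moreover have "take (Suc p) l = xs @ [True]"
    using assms by (simp add: xs_def take_Suc_conv_app_nth)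
  ultimately have l': "l[Suc p := False, p := False] = xs @ False # False # ys"
    using assms(1) by (simp add: list_update_append xs_def min_def)
  have "drop p l = l ! p # l ! Suc p # ys"
    using assms(1) unfolding ys_def by (metis Cons_nth_drop_Suc Suc_lessD)
  then have "l = xs @ True # True # ys"
    using assms(2,3) by (metis append_take_drop_id xs_def)
  then have "true_runs l =
      butlast (true_runs xs) @ [last (true_runs xs) + 2 + hd (true_runs ys)] @ tl (true_runs ys)"
    by (simp add: true_runs_append)
  moreover have "true_runs (l[Suc p := False, p := False]) =
      butlast (true_runs xs) @ [last (true_runs xs), 0, hd (true_runs ys)] @ tl (true_runs ys)"
    unfolding l' by (simp add: true_runs_append)
  ultimately show ?thesis unfolding run_step_def by blast
qed

lemma run_step_clear_last:
  assumes "p < length l" and "l ! p" and "Suc p = length l \<or> \<not> l ! Suc p"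
  shows "run_step (true_runs l) (true_runs (l[p := False]))"
proof -
  define xs where "xs = take p l"
  define ys where "ys = drop (Suc p) l"
  have "hd (true_runs ys) = 0"
    using assms by (intro hd_true_runs_eq_0) (auto simp: ys_def hd_drop_conv_nth)
  then have "true_runs l = butlast (true_runs xs) @ [Suc (last (true_runs xs))] @ tl (true_runs ys)"
    and "true_runs (l[p := False]) = butlast (true_runs xs) @ [last (true_runs xs), 0] @ tl (true_runs ys)"
    using take_True_drop[OF assms(1,2)] list.collapse[OF true_runs_ne, of ys]
    unfolding xs_def[symmetric] ys_def[symmetric] by (simp_all add: true_runs_append)
  then show ?thesis unfolding run_step_def by blast
qed

lemma run_step_clear_first:
  assumes "p < length l" and "l ! p" and "p = 0 \<or> \<not> l ! (p - 1)"
  shows "run_step (true_runs l) (true_runs (l[p := False]))"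
proof -
  define xs where "xs = take p l"
  define ys where "ys = drop (Suc p) l"
  have "xs = [] \<or> \<not> last xs"
    using assms by (cases p) (auto simp: xs_def take_Suc_conv_app_nth)
  then have "last (true_runs xs) = 0" by (rule last_true_runs_eq_0)
  then have "true_runs l = butlast (true_runs xs) @ [Suc (hd (true_runs ys))] @ tl (true_runs ys)"
    and "true_runs (l[p := False]) = butlast (true_runs xs) @ [0, hd (true_runs ys)] @ tl (true_runs ys)"
    using take_True_drop[OF assms(1,2)] unfolding xs_def[symmetric] ys_def[symmetric]
    by (simp_all add: true_runs_append)
  then show ?thesis unfolding run_step_def by blast
qed

section \<open>Positions on the path with 2h vertices\<close>

text \<open>A set D of totally dominated vertices of P_{2h} is encoded as a Boolean list of
  length 2h + 1: slot i < h stands for the even vertex 2i, slot h + 1 + i for the odd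
  vertex 2i + 1, and slot h separates the two parity classes; True marks a vertex that
  is not yet totally dominated. The slots of u - 1 and u + 1 are adjacent.\<close>

definition slot_vertex :: "nat \<Rightarrow> nat \<Rightarrow> nat" where
  "slot_vertex h i = (if i < h then 2 * i else Suc (2 * (i - Suc h)))"

definition vertex_slot :: "nat \<Rightarrow> nat \<Rightarrow> nat" where
  "vertex_slot h x = (if even x then x div 2 else Suc (h + x div 2))"

definition class_list :: "nat \<Rightarrow> nat set \<Rightarrow> bool list" where
  "class_list h D = map (\<lambda>i. i \<noteq> h \<and> slot_vertex h i \<notin> D) [0..<Suc (2 * h)]"

abbreviation path_blocks :: "nat \<Rightarrow> nat set \<Rightarrow> nat list" where
  "path_blocks h D \<equiv> true_runs (class_list h D)"

abbreviation path_legal_moves :: "nat \<Rightarrow> nat set \<Rightarrow> nat set" where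
  "path_legal_moves h D \<equiv> legal_moves {0..<2 * h} path_E D"

abbreviation after_move :: "nat \<Rightarrow> nat set \<Rightarrow> nat \<Rightarrow> nat set" where
  "after_move h D u \<equiv> D \<union> open_nbhd {0..<2 * h} path_E u"

lemma length_class_list [simp]: "length (class_list h D) = Suc (2 * h)"
  by (simp add: class_list_def)

lemma nth_class_list: "i < Suc (2 * h) \<Longrightarrow> class_list h D ! i \<longleftrightarrow> i \<noteq> h \<and> slot_vertex h i \<notin> D"
  unfolding class_list_def by (simp del: upt_Suc)

lemma vertex_slot_bounds:
  "x < 2 * h \<Longrightarrow> vertex_slot h x < Suc (2 * h) \<and> vertex_slot h x \<noteq> h \<and> slot_vertex h (vertex_slot h x) = x"
  unfolding vertex_slot_def slot_vertex_def by (cases "even x") (auto elim!: evenE oddE)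

lemma slot_vertex_bounds:
  "i < Suc (2 * h) \<Longrightarrow> i \<noteq> h \<Longrightarrow> slot_vertex h i < 2 * h \<and> vertex_slot h (slot_vertex h i) = i"
  unfolding vertex_slot_def slot_vertex_def by auto

lemma vertex_slot_Suc_Suc [simp]: "vertex_slot h (Suc (Suc x)) = Suc (vertex_slot h x)"
  unfolding vertex_slot_def by auto

lemma slot_vertex_Suc: "i \<noteq> h \<Longrightarrow> Suc i \<noteq> h \<Longrightarrow> slot_vertex h (Suc i) = Suc (Suc (slot_vertex h i))"
  unfolding slot_vertex_def by auto

lemma vertex_slot_last:
  "x < 2 * h \<Longrightarrow> 2 * h \<le> Suc (Suc x) \<Longrightarrow> Suc (vertex_slot h x) = h \<or> Suc (vertex_slot h x) = Suc (2 * h)"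
  unfolding vertex_slot_def by (cases "even x") (auto elim!: evenE oddE)

lemma nth_class_list_vertex_slot: "x < 2 * h \<Longrightarrow> class_list h D ! vertex_slot h x \<longleftrightarrow> x \<notin> D"
  using vertex_slot_bounds[of x h] by (simp add: nth_class_list)

lemma class_list_insert:
  assumes "x < 2 * h"
  shows "class_list h (insert x D) = (class_list h D)[vertex_slot h x := False]"
proof (rule nth_equalityI)
  fix i assume "i < length (class_list h (insert x D))"
  then have i: "i < Suc (2 * h)" by simp
  have "vertex_slot h x = i \<longleftrightarrow> i \<noteq> h \<and> slot_vertex h i = x"
    using vertex_slot_bounds[OF assms] slot_vertex_bounds[OF i] by metis
  then show "class_list h (insert x D) ! i = (class_list h D)[vertex_slot h x := False] ! i"
    using i by (auto simp: nth_class_list nth_list_update)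
qed simp

lemma mem_open_nbhd_path: "w \<in> open_nbhd {0..<2 * h} path_E u \<longleftrightarrow> w < 2 * h \<and> (u = Suc w \<or> w = Suc u)"
  by (auto simp: open_nbhd_def path_E_def)

lemma mem_legal_moves_path:
  "u \<in> path_legal_moves h D \<longleftrightarrow>
     u < 2 * h \<and> (\<exists>w. w \<in> open_nbhd {0..<2 * h} path_E u \<and> w \<notin> D)"
  by (auto simp: legal_moves_def)

lemma legal_moves_path_ne_iff:
  assumes "1 \<le> h"
  shows "path_legal_moves h D \<noteq> {} \<longleftrightarrow> (\<exists>L\<in>set (path_blocks h D). 1 \<le> L)"
proof
  assume "path_legal_moves h D \<noteq> {}"
  then obtain u x where "x \<in> open_nbhd {0..<2 * h} path_E u" "x \<notin> D"
    by (auto simp: mem_legal_moves_path)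
  then have "x < 2 * h" "x \<notin> D" by (simp_all add: mem_open_nbhd_path)
  then have "class_list h D ! vertex_slot h x" "vertex_slot h x < length (class_list h D)"
    using nth_class_list_vertex_slot vertex_slot_bounds by simp_all
  then have "True \<in> set (class_list h D)" by (metis nth_mem)
  then show "\<exists>L\<in>set (path_blocks h D). 1 \<le> L" by (rule ex_positive_true_run)
next
  assume "\<exists>L\<in>set (path_blocks h D). 1 \<le> L"
  then obtain L where "L \<in> set (path_blocks h D)" "1 \<le> L" by blast
  then have "True \<in> set (class_list h D)" using true_runs_eq_0 by fastforce
  then obtain i where i: "i < Suc (2 * h)" "i \<noteq> h" "slot_vertex h i \<notin> D"
    by (auto simp: in_set_conv_nth nth_class_list)
  define x where "x = slot_vertex h i"
  have x: "x < 2 * h" "x \<notin> D" using slot_vertex_bounds[OF i(1,2)] i(3) by (simp_all add: x_def)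
  obtain u where "u < 2 * h" "x = Suc u \<or> u = Suc x"
  proof (cases "Suc x < 2 * h")
    case True
    then show ?thesis using that[of "Suc x"] by blast
  next
    case False
    then have "x - 1 < 2 * h" "x = Suc (x - 1)" using assms x(1) by linarith+
    then show ?thesis using that by blast
  qed
  then have "u < 2 * h" "x \<in> open_nbhd {0..<2 * h} path_E u"
    using x(1) unfolding mem_open_nbhd_path by blast+
  then have "u \<in> path_legal_moves h D"
    using x(2) unfolding mem_legal_moves_path by blast
  then show "path_legal_moves h D \<noteq> {}" by blast
qed

lemma run_step_insert_pair:
  assumes "Suc (Suc x) < 2 * h" and "x \<notin> D" and "Suc (Suc x) \<notin> D"
  shows "run_step (path_blocks h D) (path_blocks h (insert x (insert (Suc (Suc x)) D)))"
proof -
  define l where "l = class_list h D"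
  have x: "x < 2 * h" using assms(1) by simp
  have "class_list h (insert x (insert (Suc (Suc x)) D)) =
      l[Suc (vertex_slot h x) := False, vertex_slot h x := False]"
    using assms(1) x by (simp add: class_list_insert l_def)
  moreover have "Suc (vertex_slot h x) < length l"
    using vertex_slot_bounds[OF assms(1)] by (simp add: l_def)
  moreover have "l ! vertex_slot h x" "l ! Suc (vertex_slot h x)"
    using assms nth_class_list_vertex_slot[OF x] nth_class_list_vertex_slot[OF assms(1)]
    by (auto simp: l_def)
  ultimately show ?thesis unfolding l_def[symmetric] by (metis run_step_clear_pair)
qed

lemma run_step_insert_last:
  assumes "x < 2 * h" and "x \<notin> D" and "Suc (Suc x) < 2 * h \<Longrightarrow> Suc (Suc x) \<in> D"
  shows "run_step (path_blocks h D) (path_blocks h (insert x D))"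
proof -
  define l where "l = class_list h D"
  have "vertex_slot h x < length l" "l ! vertex_slot h x"
    using vertex_slot_bounds[OF assms(1)] nth_class_list_vertex_slot[OF assms(1)] assms(2)
    by (auto simp: l_def)
  moreover have "Suc (vertex_slot h x) = length l \<or> \<not> l ! Suc (vertex_slot h x)"
  proof (cases "Suc (Suc x) < 2 * h")
    case True
    then show ?thesis using assms(3) nth_class_list_vertex_slot[OF True] by (simp add: l_def)
  next
    case False
    then show ?thesis using vertex_slot_last[OF assms(1)] by (auto simp: l_def nth_class_list)
  qed
  ultimately show ?thesis
    unfolding l_def[symmetric] class_list_insert[OF assms(1)] by (rule run_step_clear_last)
qed

lemma run_step_insert_first:
  assumes "x < 2 * h" and "x \<notin> D" and "1 \<le> x" and "2 \<le> x \<Longrightarrow> x - 2 \<in> D"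
  shows "run_step (path_blocks h D) (path_blocks h (insert x D))"
proof -
  define l where "l = class_list h D"
  have "vertex_slot h x < length l" "l ! vertex_slot h x"
    using vertex_slot_bounds[OF assms(1)] nth_class_list_vertex_slot[OF assms(1)] assms(2)
    by (auto simp: l_def)
  moreover have "vertex_slot h x = 0 \<or> \<not> l ! (vertex_slot h x - 1)"
  proof (cases "2 \<le> x")
    case True
    then have "Suc (Suc (x - 2)) = x" by simp
    then have "vertex_slot h x = Suc (vertex_slot h (x - 2))"
      by (metis vertex_slot_Suc_Suc)
    then show ?thesis
      using assms(1) assms(4)[OF True] nth_class_list_vertex_slot[of "x - 2" h D] by (simp add: l_def)
  next
    case False
    then have "x = 1" using assms(3) by simp
    then have "vertex_slot h x = Suc h" by (simp add: vertex_slot_def)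
    then show ?thesis by (simp add: l_def nth_class_list)
  qed
  ultimately show ?thesis
    unfolding l_def[symmetric] class_list_insert[OF assms(1)] by (rule run_step_clear_first)
qed

lemma legal_move_run_step:
  assumes "u \<in> path_legal_moves h D"
  shows "run_step (path_blocks h D) (path_blocks h (after_move h D u))"
proof -
  from assms obtain w where u: "u < 2 * h" and w: "w \<in> open_nbhd {0..<2 * h} path_E u" "w \<notin> D"
    by (auto simp: mem_legal_moves_path)
  consider (both) "1 \<le> u" "u - 1 \<notin> D" "Suc u < 2 * h" "Suc u \<notin> D"
    | (left) "1 \<le> u" "u - 1 \<notin> D" "Suc u < 2 * h \<Longrightarrow> Suc u \<in> D"
    | (right) "1 \<le> u \<Longrightarrow> u - 1 \<in> D" "Suc u < 2 * h" "Suc u \<notin> D"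
    using w by (auto simp: mem_open_nbhd_path) blast
  then show ?thesis
  proof cases
    case both
    then have "after_move h D u = insert (u - 1) (insert (Suc (Suc (u - 1))) D)"
      using u by (auto simp: mem_open_nbhd_path)
    then show ?thesis using both run_step_insert_pair[of "u - 1" h D] by simp
  next
    case left
    then have "after_move h D u = insert (u - 1) D" using u by (auto simp: mem_open_nbhd_path)
    then show ?thesis using left u run_step_insert_last[of "u - 1" h D] by simp
  next
    case right
    then have "after_move h D u = insert (Suc u) D" using u by (auto simp: mem_open_nbhd_path)
    then show ?thesis using right run_step_insert_first[of "Suc u" h D] by simp
  qed
qed

lemma ex_legal_move_remove_pair:
  assumes l: "class_list h D = xs @ replicate L True @ ys" and "2 \<le> L"
  shows "\<exists>u\<in>path_legal_moves h D.
           class_list h (after_move h D u) = xs @ False # False # replicate (L - 2) True @ ys"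
proof -
  define l where "l = class_list h D"
  have "L = Suc (Suc (L - 2))" using assms(2) by simp
  then have rep: "replicate L True = True # True # replicate (L - 2) True"
    by (metis replicate_Suc)
  define p where "p = length xs"
  have lp: "l ! p" "l ! Suc p" "Suc p < Suc (2 * h)"
    using l rep length_class_list[of h D] unfolding p_def l_def by (auto simp: nth_append)
  have ph: "p \<noteq> h" "Suc p \<noteq> h" using lp nth_class_list[of _ h D] by (auto simp: l_def)
  define x where "x = slot_vertex h p"
  have x: "x < 2 * h" "vertex_slot h x = p"
    using slot_vertex_bounds[of p h] lp ph by (auto simp: x_def)
  have "slot_vertex h (Suc p) = Suc (Suc x)" using slot_vertex_Suc[OF ph] by (simp add: x_def)
  then have x2: "Suc (Suc x) < 2 * h" using slot_vertex_bounds[OF lp(3) ph(2)] by simp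
  have xD: "x \<notin> D" "Suc (Suc x) \<notin> D"
    using lp x x2 nth_class_list_vertex_slot[of x h D] nth_class_list_vertex_slot[of "Suc (Suc x)" h D]
    by (auto simp: l_def)
  have move: "Suc x \<in> path_legal_moves h D"
    using x xD x2 by (auto simp: mem_legal_moves_path mem_open_nbhd_path)
  have "after_move h D (Suc x) = insert x (insert (Suc (Suc x)) D)"
    using x2 by (auto simp: mem_open_nbhd_path)
  then have "class_list h (after_move h D (Suc x)) = xs @ False # False # replicate (L - 2) True @ ys"
    using x x2 l rep by (simp add: class_list_insert p_def list_update_append)
  with move show ?thesis by blast
qed

lemma ex_legal_move_remove_first:
  assumes l: "class_list h D = xs @ replicate L True @ ys" and "1 \<le> L" and "xs \<noteq> []"
    and "\<not> last xs"
  shows "\<exists>u\<in>path_legal_moves h D. class_list h (after_move h D u) = xs @ False # replicate (L - 1) True @ ys"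
proof -
  define l where "l = class_list h D"
  have "L = Suc (L - 1)" using assms(2) by simp
  then have rep: "replicate L True = True # replicate (L - 1) True"
    by (metis replicate_Suc)
  define p where "p = length xs"
  have lp: "l ! p" "p < Suc (2 * h)" "\<not> l ! (p - 1)" "1 \<le> p"
    using l rep length_class_list[of h D] assms(3,4) unfolding p_def l_def
    by (auto simp: nth_append last_conv_nth Suc_le_eq)
  have ph: "p \<noteq> h" using lp nth_class_list[of _ h D] by (auto simp: l_def)
  define x where "x = slot_vertex h p"
  have x: "x < 2 * h" "vertex_slot h x = p"
    using slot_vertex_bounds[of p h] lp ph by (auto simp: x_def)
  have xD: "x \<notin> D" using lp x nth_class_list_vertex_slot[of x h D] by (auto simp: l_def)
  have x1: "1 \<le> x" using x lp(4) by (cases x) (auto simp: vertex_slot_def)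
  have before: "w \<in> D" if "Suc w = x - 1" for w
  proof -
    have "Suc (Suc w) = x" using that x1 by simp
    then have "vertex_slot h x = Suc (vertex_slot h w)" by auto
    moreover have "w < 2 * h" using \<open>Suc (Suc w) = x\<close> x(1) by simp
    ultimately show "w \<in> D" using nth_class_list_vertex_slot[of w h D] x lp by (simp add: l_def)
  qed
  have move: "x - 1 \<in> path_legal_moves h D"
    using x xD x1 by (auto simp: mem_legal_moves_path mem_open_nbhd_path)
  have "after_move h D (x - 1) = insert x D"
    using x x1 before by (auto simp: mem_open_nbhd_path)
  then have "class_list h (after_move h D (x - 1)) = xs @ False # replicate (L - 1) True @ ys"
    using x l rep by (simp add: class_list_insert p_def list_update_append)
  with move show ?thesis by blast
qed

lemma ex_legal_move_remove_last:
  assumes l: "class_list h D = replicate L True @ ys" and "1 \<le> L" and "hd (true_runs ys) = 0"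
  shows "\<exists>u\<in>path_legal_moves h D. class_list h (after_move h D u) = replicate (L - 1) True @ False # ys"
proof -
  define l where "l = class_list h D"
  have block: "\<forall>i<L. l ! i" using l by (simp add: l_def nth_append)
  have "L \<le> h"
  proof (rule ccontr)
    assume "\<not> L \<le> h"
    then have "l ! h" using block by simp
    then show False by (simp add: l_def nth_class_list)
  qed
  then have ys_ne: "ys \<noteq> []" using l length_class_list[of h D] by auto
  then have "\<not> hd ys" using assms(3) by (cases ys) (auto split: bool.splits)
  then have after: "\<not> l ! L" using l ys_ne by (simp add: l_def nth_append hd_conv_nth)
  define x where "x = 2 * (L - 1)"
  have x: "x < 2 * h" "vertex_slot h x = L - 1"
    using \<open>L \<le> h\<close> assms(2) by (auto simp: x_def vertex_slot_def)
  have xD: "x \<notin> D" using block x nth_class_list_vertex_slot[of x h D] assms(2) by (auto simp: l_def)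
  have x2: "Suc (Suc x) \<in> D" if "Suc (Suc x) < 2 * h"
  proof -
    have "vertex_slot h (Suc (Suc x)) = L" using x assms(2) by simp
    then show ?thesis using nth_class_list_vertex_slot[OF that, of D] after by (simp add: l_def)
  qed
  have "Suc x < 2 * h" "x \<in> open_nbhd {0..<2 * h} path_E (Suc x)"
    using x \<open>L \<le> h\<close> by (auto simp: mem_open_nbhd_path x_def)
  then have move: "Suc x \<in> path_legal_moves h D"
    using xD unfolding mem_legal_moves_path by blast
  have "after_move h D (Suc x) = insert x D"
    using x x2 by (auto simp: mem_open_nbhd_path)
  moreover have "l[L - 1 := False] = replicate (L - 1) True @ False # ys"
  proof -
    have "L = Suc (L - 1)" using assms(2) by simp
    then have "replicate L True = True # replicate (L - 1) True" by (metis replicate_Suc)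
    then have "l = replicate (L - 1) True @ True # ys"
      using l by (simp add: l_def replicate_append_same)
    then show ?thesis by (metis length_replicate list_update_length)
  qed
  ultimately have "class_list h (after_move h D (Suc x)) = replicate (L - 1) True @ False # ys"
    using x by (simp add: class_list_insert l_def)
  with move show ?thesis by blast
qed

lemma ex_legal_move_clear_pair:
  assumes "L \<in> set (path_blocks h D)" and "2 \<le> L"
  shows "\<exists>u\<in>path_legal_moves h D. \<exists>R1 R2.
           path_blocks h D = R1 @ [L] @ R2 \<and>
           path_blocks h (after_move h D u) = R1 @ [0, 0, L - 2] @ R2"
proof -
  obtain xs ys where l: "class_list h D = xs @ replicate L True @ ys" and xs: "xs = [] \<or> \<not> last xs"
    and ys: "hd (true_runs ys) = 0"
    using assms(1) true_runs_obtain_block by metis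
  have last_xs: "last (true_runs xs) = 0" using xs by (rule last_true_runs_eq_0)
  obtain u where u: "u \<in> path_legal_moves h D"
    and "class_list h (after_move h D u) = xs @ False # False # replicate (L - 2) True @ ys"
    using ex_legal_move_remove_pair[OF l assms(2)] by blast
  then have "path_blocks h (after_move h D u) = butlast (true_runs xs) @ [0, 0, L - 2] @ tl (true_runs ys)"
    using last_xs ys by (simp add: true_runs_append true_runs_replicate_append true_runs_replicate)
  moreover have "path_blocks h D = butlast (true_runs xs) @ [L] @ tl (true_runs ys)"
    using true_runs_block[OF last_xs ys] l by simp
  ultimately show ?thesis using u by blast
qed

lemma ex_legal_move_shorten:
  assumes "L \<in> set (path_blocks h D)" and "1 \<le> L"
  shows "\<exists>u\<in>path_legal_moves h D. \<exists>R1 R2.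
           path_blocks h D = R1 @ [L] @ R2 \<and>
           (path_blocks h (after_move h D u) = R1 @ [0, L - 1] @ R2 \<or>
            path_blocks h (after_move h D u) = R1 @ [L - 1, 0] @ R2)"
proof -
  obtain xs ys where l: "class_list h D = xs @ replicate L True @ ys" and xs: "xs = [] \<or> \<not> last xs"
    and ys: "hd (true_runs ys) = 0"
    using assms(1) true_runs_obtain_block by metis
  have last_xs: "last (true_runs xs) = 0" using xs by (rule last_true_runs_eq_0)
  have blocks: "path_blocks h D = butlast (true_runs xs) @ [L] @ tl (true_runs ys)"
    using true_runs_block[OF last_xs ys] l by simp
  show ?thesis
  proof (cases "xs = []")
    case False
    obtain u where u: "u \<in> path_legal_moves h D"
      and "class_list h (after_move h D u) = xs @ False # replicate (L - 1) True @ ys"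
      using ex_legal_move_remove_first[OF l assms(2) False] xs False by blast
    then have "path_blocks h (after_move h D u) = butlast (true_runs xs) @ [0, L - 1] @ tl (true_runs ys)"
      using last_xs ys by (simp add: true_runs_append true_runs_replicate_append true_runs_replicate)
    then show ?thesis using u blocks by blast
  next
    case True
    obtain u where u: "u \<in> path_legal_moves h D"
      and "class_list h (after_move h D u) = replicate (L - 1) True @ False # ys"
      using ex_legal_move_remove_last[of h D L ys] l True assms(2) ys by auto
    then have "path_blocks h (after_move h D u) = [] @ [L - 1, 0] @ tl (true_runs ys)"
      using ys list.collapse[OF true_runs_ne, of ys] by (simp add: true_runs_append_False true_runs_replicate)
    moreover have "path_blocks h D = [] @ [L] @ tl (true_runs ys)" using blocks True by simp
    ultimately show ?thesis using u by blast
  qed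
qed

lemma ex_Dominator_optimal_move:
  assumes "\<exists>L\<in>set (path_blocks h D). 1 \<le> L"
  shows "\<exists>u\<in>path_legal_moves h D.
           position_value True (path_blocks h D) =
           1 + position_value False (path_blocks h (after_move h D u))"
proof -
  let ?R = "path_blocks h D"
  obtain L where L: "L \<in> set ?R" "1 \<le> L" "L mod 3 = 2 \<or> critical_runs ?R = 0"
  proof (cases "\<exists>L\<in>set ?R. L mod 3 = 2")
    case True
    then obtain L where "L \<in> set ?R" "L mod 3 = 2" by blast
    moreover from \<open>L mod 3 = 2\<close> have "1 \<le> L" by (cases L) auto
    ultimately show ?thesis using that by blast
  next
    case False
    then have "critical_runs ?R = 0" by (intro critical_runs_eq_0) blast
    then show ?thesis using that assms by blast
  qed
  show ?thesis
  proof (cases "2 \<le> L")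
    case True
    from ex_legal_move_clear_pair[OF L(1) True] obtain u R1 R2
      where u: "u \<in> path_legal_moves h D" "?R = R1 @ [L] @ R2"
        "path_blocks h (after_move h D u) = R1 @ [0, 0, L - 2] @ R2"
      by blast
    have "L = Suc (Suc (L - 2))" using True by simp
    then have "position_value True (R1 @ [L] @ R2) = 1 + position_value False (R1 @ [0, 0, L - 2] @ R2)"
      using position_value_Dominator_pair[of "L - 2" R1 R2] L(3) u(2) by simp
    then show ?thesis using u by metis
  next
    case False
    then have "L = 1" using L(2) by simp
    then have "critical_runs ?R = 0" using L(3) by simp
    from ex_legal_move_shorten[OF L(1,2)] obtain u R1 R2
      where u: "u \<in> path_legal_moves h D" "?R = R1 @ [L] @ R2"
        "path_blocks h (after_move h D u) = R1 @ [0, L - 1] @ R2 \<or>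
         path_blocks h (after_move h D u) = R1 @ [L - 1, 0] @ R2"
      by blast
    have "path_blocks h (after_move h D u) = R1 @ [0, 0] @ R2"
      using u(3) \<open>L = 1\<close> by auto
    moreover have "position_value True (R1 @ [1] @ R2) = 1 + position_value False (R1 @ [0, 0] @ R2)"
      using position_value_Dominator_single \<open>critical_runs ?R = 0\<close> u(2) \<open>L = 1\<close> by simp
    ultimately show ?thesis using u \<open>L = 1\<close> by metis
  qed
qed

lemma ex_Staller_optimal_move:
  assumes "\<exists>L\<in>set (path_blocks h D). 1 \<le> L"
  shows "\<exists>u\<in>path_legal_moves h D.
           position_value False (path_blocks h D) =
           1 + position_value True (path_blocks h (after_move h D u))"
proof -
  let ?R = "path_blocks h D"
  obtain L where L: "L \<in> set ?R" "1 \<le> L" "L mod 3 \<noteq> 1 \<or> critical_runs ?R = 0"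
  proof (cases "\<exists>L\<in>set ?R. 1 \<le> L \<and> L mod 3 \<noteq> 1")
    case True
    then show ?thesis using that by blast
  next
    case False
    have "L mod 3 \<noteq> 2" if "L \<in> set ?R" for L
      using False that by (cases L) auto
    then have "critical_runs ?R = 0" by (intro critical_runs_eq_0) blast
    then show ?thesis using that assms by blast
  qed
  from ex_legal_move_shorten[OF L(1,2)] obtain u R1 R2
    where u: "u \<in> path_legal_moves h D" "?R = R1 @ [L] @ R2"
      "path_blocks h (after_move h D u) = R1 @ [0, L - 1] @ R2 \<or>
       path_blocks h (after_move h D u) = R1 @ [L - 1, 0] @ R2"
    by blast
  have "L = Suc (L - 1)" using L(2) by simp
  then have "1 + position_value True (R1 @ [0, L - 1] @ R2) = position_value False (R1 @ [L] @ R2)"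
    using position_value_Staller[of "L - 1" R1 R2] L(3) u(2) by simp
  moreover have "position_value True (path_blocks h (after_move h D u)) =
      position_value True (R1 @ [0, L - 1] @ R2)"
    using u(3) position_value_swap by metis
  ultimately show ?thesis using u by metis
qed

section \<open>Solving the game by a value function\<close>

lemma tg_val_eqI:
  fixes val :: "'a set \<Rightarrow> bool \<Rightarrow> nat"
  assumes "finite V"
    and final: "\<And>D d. legal_moves V E D = {} \<Longrightarrow> val D d = 0"
    and Dominator_bound:
      "\<And>D u. u \<in> legal_moves V E D \<Longrightarrow> val D True \<le> 1 + val (D \<union> open_nbhd V E u) False"
    and Staller_bound:
      "\<And>D u. u \<in> legal_moves V E D \<Longrightarrow> 1 + val (D \<union> open_nbhd V E u) True \<le> val D False"
    and Dominator_move: "\<And>D. legal_moves V E D \<noteq> {} \<Longrightarrow>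
      \<exists>u\<in>legal_moves V E D. val D True = 1 + val (D \<union> open_nbhd V E u) False"
    and Staller_move: "\<And>D. legal_moves V E D \<noteq> {} \<Longrightarrow>
      \<exists>u\<in>legal_moves V E D. val D False = 1 + val (D \<union> open_nbhd V E u) True"
    and "card (V - D) < f"
  shows "tg_val f V E D d = val D d"
  using \<open>card (V - D) < f\<close>
proof (induction f arbitrary: D d)
  case (Suc f)
  let ?M = "legal_moves V E D"
  let ?next = "\<lambda>u. D \<union> open_nbhd V E u"
  have IH: "tg_val f V E (?next u) d' = val (?next u) d'" if "u \<in> ?M" for u d'
  proof (rule Suc.IH)
    from that obtain w where "w \<in> open_nbhd V E u" "w \<notin> D" by (auto simp: legal_moves_def)
    then have "V - ?next u \<subset> V - D" by (auto simp: open_nbhd_def)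
    then have "card (V - ?next u) < card (V - D)" using \<open>finite V\<close> by (intro psubset_card_mono) auto
    then show "card (V - ?next u) < f" using Suc.prems by simp
  qed
  have fin: "finite ?M" using \<open>finite V\<close> by (simp add: legal_moves_def)
  show ?case
  proof (cases "?M = {}")
    case True
    then show ?thesis using final by simp
  next
    case False
    have "Min ((\<lambda>u. tg_val f V E (?next u) False) ` ?M) = val D True - 1"
    proof (rule Min_eqI)
      obtain u where "u \<in> ?M" "val D True = 1 + val (?next u) False"
        using Dominator_move[OF False] by blast
      then show "val D True - 1 \<in> (\<lambda>u. tg_val f V E (?next u) False) ` ?M" using IH by force
    qed (use fin IH Dominator_bound in force)+
    moreover have "Max ((\<lambda>u. tg_val f V E (?next u) True) ` ?M) = val D False - 1"
    proof (rule Max_eqI)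
      obtain u where "u \<in> ?M" "val D False = 1 + val (?next u) True"
        using Staller_move[OF False] by blast
      then show "val D False - 1 \<in> (\<lambda>u. tg_val f V E (?next u) True) ` ?M" using IH by force
    qed (use fin IH Staller_bound in force)+
    moreover have "1 \<le> val D True" "1 \<le> val D False"
      using Dominator_move[OF False] Staller_move[OF False] by auto
    ultimately show ?thesis using False by (cases d) simp_all
  qed
qed simp

lemma tg_val_path:
  assumes "1 \<le> h" and "card ({0..<2 * h} - D) < f"
  shows "tg_val f {0..<2 * h} path_E D d = position_value d (path_blocks h D)"
proof (rule tg_val_eqI[where val = "\<lambda>D d. position_value d (path_blocks h D)"])
  fix D :: "nat set" and d
  assume "path_legal_moves h D = {}"
  then have "\<not> (\<exists>L\<in>set (path_blocks h D). 1 \<le> L)"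
    using legal_moves_path_ne_iff[OF assms(1), of D] by blast
  then have "\<forall>L\<in>set (path_blocks h D). L = 0" by auto
  then show "position_value d (path_blocks h D) = 0" by (rule position_value_eq_0)
qed (use assms(2) run_step_value_bounds[OF legal_move_run_step] legal_moves_path_ne_iff[OF assms(1)]
      ex_Dominator_optimal_move ex_Staller_optimal_move in auto)

lemma gamma_tg_rel_path:
  assumes "1 \<le> h"
  shows "gamma_tg_rel {0..<2 * h} path_E S = position_value True (path_blocks h S)"
proof -
  have "card ({0..<2 * h} - S) < Suc (card {0..<2 * h})"
    using card_mono[of "{0..<2 * h}" "{0..<2 * h} - S"] by auto
  then show ?thesis unfolding gamma_tg_rel_def by (rule tg_val_path[OF assms])
qed

section \<open>Invariance under isomorphism\<close>

lemma open_nbhd_image: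
  assumes "bij_betw g V V'" and "\<forall>x\<in>V. \<forall>y\<in>V. E x y \<longleftrightarrow> E' (g x) (g y)" and "u \<in> V"
  shows "g ` open_nbhd V E u = open_nbhd V' E' (g u)"
proof
  show "g ` open_nbhd V E u \<subseteq> open_nbhd V' E' (g u)"
    using assms by (auto simp: open_nbhd_def bij_betw_def)
  show "open_nbhd V' E' (g u) \<subseteq> g ` open_nbhd V E u"
  proof
    fix w' assume "w' \<in> open_nbhd V' E' (g u)"
    then obtain w where "w \<in> V" "w' = g w" "E' (g u) (g w)"
      using assms(1) by (auto simp: open_nbhd_def bij_betw_def)
    then show "w' \<in> g ` open_nbhd V E u" using assms(2,3) by (auto simp: open_nbhd_def)
  qed
qed

lemma legal_moves_image:
  assumes "bij_betw g V V'" and "\<forall>x\<in>V. \<forall>y\<in>V. E x y \<longleftrightarrow> E' (g x) (g y)" and "D \<subseteq> V"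
  shows "legal_moves V' E' (g ` D) = g ` legal_moves V E D"
proof -
  have diff: "open_nbhd V' E' (g u) - g ` D = g ` (open_nbhd V E u - D)" if "u \<in> V" for u
  proof -
    have "inj_on g V" "open_nbhd V E u \<subseteq> V" using assms(1) by (auto simp: bij_betw_def open_nbhd_def)
    then have "g ` (open_nbhd V E u - D) = g ` open_nbhd V E u - g ` D"
      using assms(3) by (intro inj_on_image_set_diff) auto
    then show ?thesis using open_nbhd_image[OF assms(1,2) that] by simp
  qed
  have V': "V' = g ` V" using assms(1) by (simp add: bij_betw_def)
  show ?thesis
  proof (intro equalityI subsetI)
    fix u' assume "u' \<in> legal_moves V' E' (g ` D)"
    then obtain u where "u \<in> V" "u' = g u" "open_nbhd V' E' (g u) - g ` D \<noteq> {}"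
      using V' by (auto simp: legal_moves_def)
    then show "u' \<in> g ` legal_moves V E D" using diff by (auto simp: legal_moves_def)
  next
    fix u' assume "u' \<in> g ` legal_moves V E D"
    then obtain u where u: "u \<in> V" "u' = g u" "open_nbhd V E u - D \<noteq> {}"
      by (auto simp: legal_moves_def)
    then have "open_nbhd V' E' u' - g ` D \<noteq> {}" using diff by simp
    moreover have "u' \<in> V'" using u V' by simp
    ultimately show "u' \<in> legal_moves V' E' (g ` D)" unfolding legal_moves_def by blast
  qed
qed

lemma tg_val_iso:
  assumes "bij_betw g V V'" and "\<forall>x\<in>V. \<forall>y\<in>V. E x y \<longleftrightarrow> E' (g x) (g y)" and "D \<subseteq> V"
  shows "tg_val f V E D d = tg_val f V' E' (g ` D) d"
  using assms(3)
proof (induction f arbitrary: D d)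
  case (Suc f)
  have "tg_val f V' E' (g ` D \<union> open_nbhd V' E' (g u)) d' = tg_val f V E (D \<union> open_nbhd V E u) d'"
    if "u \<in> legal_moves V E D" for u d'
  proof -
    have "u \<in> V" using that by (simp add: legal_moves_def)
    then have "g ` D \<union> open_nbhd V' E' (g u) = g ` (D \<union> open_nbhd V E u)"
      using open_nbhd_image[OF assms(1,2)] by (simp add: image_Un)
    moreover have "D \<union> open_nbhd V E u \<subseteq> V" using Suc.prems by (auto simp: open_nbhd_def)
    ultimately show ?thesis using Suc.IH by simp
  qed
  then have "(\<lambda>u'. tg_val f V' E' (g ` D \<union> open_nbhd V' E' u') d') ` legal_moves V' E' (g ` D) =
      (\<lambda>u. tg_val f V E (D \<union> open_nbhd V E u) d') ` legal_moves V E D" for d'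
    unfolding legal_moves_image[OF assms(1,2) Suc.prems] image_image by (intro image_cong) auto
  then show ?case
    using legal_moves_image[OF assms(1,2) Suc.prems]
    by (simp del: tg_val.simps add: tg_val.simps(2)[of f V E] tg_val.simps(2)[of f V' E'])
qed simp

lemma gamma_tg_rel_iso:
  assumes "bij_betw g V V'" and "\<forall>x\<in>V. \<forall>y\<in>V. E x y \<longleftrightarrow> E' (g x) (g y)" and "S \<subseteq> V"
  shows "gamma_tg_rel V E S = gamma_tg_rel V' E' (g ` S)"
  unfolding gamma_tg_rel_def bij_betw_same_card[OF assms(1)] using tg_val_iso[OF assms] .

lemma replicate_list_update:
  "p < k \<Longrightarrow> (replicate k v)[p := w] = replicate p v @ w # replicate (k - Suc p) v"
  by (simp add: upd_conv_take_nth_drop)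

lemma class_list_empty: "class_list h {} = replicate h True @ False # replicate h True"
proof (rule nth_equalityI)
  fix i assume "i < length (class_list h {})"
  then show "class_list h {} ! i = (replicate h True @ False # replicate h True) ! i"
    by (auto simp: nth_class_list nth_append nth_Cons split: nat.splits)
qed simp

lemma path_blocks_empty: "path_blocks h {} = [h, h]"
  unfolding class_list_empty true_runs_append_False by (simp add: true_runs_replicate)

lemma path_blocks_singleton:
  assumes "x < 2 * h"
  obtains a c where "a + c + 1 = h"
    and "path_blocks h {x} = [a, c, h] \<or> path_blocks h {x} = [h, a, c]"
proof -
  let ?p = "vertex_slot h x"
  have l: "class_list h {x} = (replicate h True @ False # replicate h True)[?p := False]"
    using class_list_insert[OF assms, of "{}"] by (simp add: class_list_empty)
  show ?thesis
  proof (cases "?p < h")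
    case True
    then have "class_list h {x} =
        (replicate ?p True @ False # replicate (h - Suc ?p) True) @ False # replicate h True"
      using l by (simp add: list_update_append replicate_list_update)
    then have "path_blocks h {x} = [?p, h - Suc ?p, h]"
      by (simp only: true_runs_append_False append_assoc true_runs_replicate append_Cons) simp
    then show ?thesis using that[of ?p "h - Suc ?p"] True by simp
  next
    case False
    define q where "q = ?p - Suc h"
    have q: "q < h" "?p = Suc (h + q)"
      using vertex_slot_bounds[OF assms] False by (auto simp: q_def)
    then have "class_list h {x} = replicate h True @ False # (replicate q True @ False # replicate (h - Suc q) True)"
      using l by (simp add: list_update_append replicate_list_update)
    then have "path_blocks h {x} = [h, q, h - Suc q]"
      by (simp only: true_runs_append_False append_assoc true_runs_replicate append_Cons) simp
    then show ?thesis using that[of q "h - Suc q"] q by simp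
  qed
qed

lemma position_value_two_runs: "position_value True [3 * k + 1, 3 * k + 1] = 4 * k + 2"
  using run_cost_3_mult_add[of k 1] by (simp add: position_value_def run_cost_def)

lemma position_value_split_run:
  assumes "a + c = 3 * k"
  shows "position_value True [a, c, 3 * k + 1] \<le> 4 * k + 1"
    and "position_value True [3 * k + 1, a, c] \<le> 4 * k + 1"
proof -
  define i where "i = a mod 3"
  define j where "j = c mod 3"
  have a: "a = 3 * (a div 3) + i" and c: "c = 3 * (c div 3) + j" unfolding i_def j_def by simp_all
  have "run_cost a = 2 * (a div 3) + run_cost i" "run_cost c = 2 * (c div 3) + run_cost j"
    using a c run_cost_3_mult_add by metis+
  moreover have "i < 3" "j < 3" unfolding i_def j_def by simp_all
  moreover have k: "3 * k = 3 * (a div 3) + 3 * (c div 3) + i + j" using assms a c by simp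
  moreover have "2 * (a div 3) + run_cost i + 2 * (c div 3) + run_cost j
      + ((if i = 2 then 1 else 0) + (if j = 2 then 1 else 0)) div 2 \<le> 2 * k"
    using less_3_cases[OF \<open>i < 3\<close>] less_3_cases[OF \<open>j < 3\<close>] k
    by (elim disjE) (simp_all add: run_cost_def)
  ultimately have "run_cost a + run_cost c
      + ((if a mod 3 = 2 then 1 else 0) + (if c mod 3 = 2 then 1 else 0)) div 2 \<le> 2 * k"
    unfolding i_def[symmetric] j_def[symmetric] by simp
  moreover have "run_cost (3 * k + 1) = 2 * k + 1" using run_cost_3_mult_add[of k 1] by (simp add: run_cost_def)
  ultimately show "position_value True [a, c, 3 * k + 1] \<le> 4 * k + 1"
    and "position_value True [3 * k + 1, a, c] \<le> 4 * k + 1"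
    by (simp_all add: position_value_def split: if_splits)
qed

theorem lemma3p5:
  fixes V :: "'a set" and E :: "'a \<Rightarrow> 'a \<Rightarrow> bool" and n :: nat and v :: 'a
  assumes "n \<ge> 2" and "n mod 6 = 2"
    and "graph_iso V E (path_V n) path_E"
    and "v \<in> V"
  shows "gamma_tg_rel V E {v} \<le> gamma_tg V E - 1"
proof -
  obtain g where g: "bij_betw g V (path_V n)" "\<forall>x\<in>V. \<forall>y\<in>V. E x y \<longleftrightarrow> path_E (g x) (g y)"
    using assms(3) unfolding graph_iso_def by blast
  define k where "k = n div 6"
  have "n = 2 * (3 * k + 1)" using assms(2) unfolding k_def by presburger
  then have path: "path_V n = {0..<2 * (3 * k + 1)}" by (simp add: path_V_def)
  have game_value: "gamma_tg_rel V E S = position_value True (path_blocks (3 * k + 1) (g ` S))"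
    if "S \<subseteq> V" for S
    using gamma_tg_rel_iso[OF g that] gamma_tg_rel_path[of "3 * k + 1"] path by simp
  have gamma_tg: "gamma_tg V E = 4 * k + 2"
    using game_value[of "{}"] position_value_two_runs by (simp add: gamma_tg_def path_blocks_empty)
  have "g v < 2 * (3 * k + 1)" using g(1) assms(4) path by (auto simp: bij_betw_def)
  then obtain a c where "a + c + 1 = 3 * k + 1" and
    "path_blocks (3 * k + 1) {g v} = [a, c, 3 * k + 1] \<or>
     path_blocks (3 * k + 1) {g v} = [3 * k + 1, a, c]"
    by (rule path_blocks_singleton)
  then have "gamma_tg_rel V E {v} \<le> 4 * k + 1"
    using game_value[of "{v}"] assms(4) position_value_split_run[of a c k] by auto
  with gamma_tg show ?thesis by simp
qed

end
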